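(* Let $p$ be a prime, $\alpha_1,\dots,\alpha_n,\beta\ge1$, and let $f:\mathbb{Z}_{p^{\alpha_1}}\times\cdots\times\mathbb{Z}_{p^{\alpha_n}}\to\mathbb{Z}_{p^\beta}$ be any map. Put $d_j:=p^{\alpha_j}-1+(\beta-1)(p-1)p^{\alpha_j-1}$ and $[d]:=\{0,\dots,d_1\}\times\cdots\times\{0,\dots,d_n\}$. Then the polyfract $$P=\sum_{\delta\in[d]}P_\delta\prod_{j=1}^n\binom{X_j}{\delta_j},\qquad P_\delta:=\sum_{x\in\mathbb{Z}_{p^{\alpha_1}}\times\cdots\times\mathbb{Z}_{p^{\alpha_n}}}\binom{\delta_1}{\delta_1-x_1}_{p^{\alpha_1},p^\beta}\cdots\binom{\delta_n}{\delta_n-x_n}_{p^{\alpha_n},p^\beta}f(x),$$ is $(p^{\alpha_1},\dots,p^{\alpha_n})$-periodic and interpolates $f$: $P(x)=f(x)$ for all $x\in\mathbb{Z}_{p^{\alpha_1}}\times\cdots\times\mathbb{Z}_{p^{\alpha_n}}$.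
   Context: $\mathbb{Z}_r=\mathbb{Z}/r\mathbb{Z}$; $\binom{X}{\delta}=X(X-1)\cdots(X-\delta+1)/\delta!$, $\binom{X}{0}=1$. For integers $d\ge0$, $q\ge1$, $r\ge0$ and a residue class $x\in\mathbb{Z}_q$, the co-monofract value is $\binom{d}{x}_{q}:=\sum_{\hat x\in x,\ \hat x\ge0}(-1)^{\hat x}\binom{d}{\hat x}\in\mathbb{Z}$ (only $\hat x\le d$ contribute) and $\binom{d}{x}_{q,r}:=\binom{d}{x}_q+r\mathbb{Z}\in\mathbb{Z}_r$; here $\delta_j-x_j$ denotes the residue class $\delta_j+\mathbb{Z}_{p^{\alpha_j}}$-difference in $\mathbb{Z}_{p^{\alpha_j}}$. A polyfract $P$ is evaluated at $x\in\mathbb{Z}^n$ by $P(x)=\sum_\delta(\prod_j\binom{x_j}{\delta_j})P_\delta\in\mathbb{Z}_{p^\beta}$; being periodic, it induces a map on $\mathbb{Z}_{p^{\alpha_1}}\times\cdots\times\mathbb{Z}_{p^{\alpha_n}}$. *)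

theory Defs
  imports "HOL-Computational_Algebra.Primes" "HOL-Number_Theory.Cong" "HOL-Library.FuncSet"
begin

definition comono :: "nat \<Rightarrow> int \<Rightarrow> nat \<Rightarrow> int" where
  "comono d c q = (\<Sum>k\<in>{k. k \<le> d \<and> [int k = c] (mod int q)}. (-1)^k * int (d choose k))"

text \<open>Binomial of an integer: X(X-1)...(X-k+1)/k! (exact division).\<close>
definition int_binom :: "int \<Rightarrow> nat \<Rightarrow> int" where
  "int_binom X k = (\<Prod>i<k. X - int i) div fact k"

definition polyfract_eval :: "nat \<Rightarrow> (nat \<Rightarrow> nat) \<Rightarrow> ((nat \<Rightarrow> nat) \<Rightarrow> int) \<Rightarrow> (nat \<Rightarrow> int) \<Rightarrow> int" where
  "polyfract_eval n D coef x =
     (\<Sum>\<delta>\<in>PiE {..<n} (\<lambda>j. {0..D j}). (\<Prod>j<n. int_binom (x j) (\<delta> j)) * coef \<delta>)"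

text \<open>The coefficient P_delta (as an integer representative in 0..p^beta-1).
  Elements of Z_{p^alpha_j} are represented by 0..p^alpha_j-1.\<close>
definition interp_coef :: "nat \<Rightarrow> (nat \<Rightarrow> nat) \<Rightarrow> nat \<Rightarrow> nat \<Rightarrow> ((nat \<Rightarrow> nat) \<Rightarrow> int) \<Rightarrow> (nat \<Rightarrow> nat) \<Rightarrow> int" where
  "interp_coef p \<alpha> \<beta> n f \<delta> =
     (\<Sum>x\<in>PiE {..<n} (\<lambda>j. {..<p ^ \<alpha> j}).
        (\<Prod>j<n. comono (\<delta> j) (int (\<delta> j) - int (x j)) (p ^ \<alpha> j)) * f x) mod (int p ^ \<beta>)"

end

theory Submission
  imports Defs "HOL-Computational_Algebra.Polynomial"
begin

text \<open>
  Let E be the shift operator on integer sequences; a q-periodic sequence, q = p^\<alpha>, is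
  annihilated by E^q - 1. In every commutative ring, (x - 1)^(q + k(p-1)p^(\<alpha>-1)) lies in
  the ideal (p^(k+1), x^q - 1): with y = x^(p^(\<alpha>-1)) and \<Phi> = 1 + y + ... + y^(p-1), Frobenius
  gives (x - 1)^(p^(\<alpha>-1)) \<equiv> y - 1 and (y - 1)^(p-1) \<equiv> \<Phi> mod p, while \<Phi>^2 \<equiv> p \<Phi> modulo
  (y - 1) \<Phi> = x^q - 1. Applying (E - 1)^n at 0, every forward difference of order n > d of a
  q-periodic sequence is divisible by p^\<beta>. So the Newton series of the indicator of a
  residue class mod q, truncated at degree d, agrees with the indicator modulo p^\<beta> on all of
  \<nat>, and is therefore q-periodic; its coefficients are the co-monofract values. After
  exchanging sums, P is the sum over x of f(x) times a product of these one-variable indicators.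
\<close>

definition ring_cong :: "'a::comm_ring_1 \<Rightarrow> 'a \<Rightarrow> 'a \<Rightarrow> bool" where
  "ring_cong m a b \<longleftrightarrow> m dvd a - b"

lemma ring_cong_refl [simp]: "ring_cong m a a"
  by (simp add: ring_cong_def)

lemma ring_cong_trans [trans]: "ring_cong m a b \<Longrightarrow> ring_cong m b c \<Longrightarrow> ring_cong m a c"
  unfolding ring_cong_def by (metis diff_add_cancel add_diff_eq dvd_add)

lemma ring_cong_add: "ring_cong m a b \<Longrightarrow> ring_cong m c e \<Longrightarrow> ring_cong m (a + c) (b + e)"
  unfolding ring_cong_def by (metis add_diff_add dvd_add)

lemma ring_cong_mult:
  assumes "ring_cong m a b" and "ring_cong m c e"
  shows "ring_cong m (a * c) (b * e)"
proof -
  have "a * c - b * e = (a - b) * c + b * (c - e)"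
    by (simp add: algebra_simps)
  then show ?thesis
    using assms unfolding ring_cong_def by (metis dvd_add dvd_mult dvd_mult2)
qed

lemma ring_cong_power: "ring_cong m a b \<Longrightarrow> ring_cong m (a ^ n) (b ^ n)"
  by (induction n) (simp_all add: ring_cong_mult)

lemma ring_cong_sum:
  "(\<And>i. i \<in> A \<Longrightarrow> ring_cong m (f i) (g i)) \<Longrightarrow> ring_cong m (sum f A) (sum g A)"
  unfolding ring_cong_def by (simp add: dvd_sum flip: sum_subtractf)

lemma ring_cong_mult_modulus: "ring_cong m a b \<Longrightarrow> ring_cong (m * c) (a * c) (b * c)"
  unfolding ring_cong_def by (metis left_diff_distrib mult_dvd_mono dvd_refl)

lemma ring_cong_of_int:
  "[a = b] (mod int m) \<Longrightarrow> ring_cong (of_nat m) (of_int a :: 'a::comm_ring_1) (of_int b)"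
proof -
  assume "[a = b] (mod int m)"
  then obtain k where "a - b = int m * k"
    unfolding cong_iff_dvd_diff by (elim dvdE)
  then have "of_int a - of_int b = (of_nat m * of_int k :: 'a)"
    by (metis of_int_diff of_int_mult of_int_of_nat_eq)
  then show ?thesis
    unfolding ring_cong_def by simp
qed

lemma ring_cong_iff_eq_add: "ring_cong m a b \<longleftrightarrow> (\<exists>c. a = b + m * c)"
  unfolding ring_cong_def dvd_def by (metis add_diff_cancel_left' diff_add_cancel add.commute)

lemma add_power_prime_cong:
  fixes a b :: "'a::comm_ring_1"
  assumes p: "prime p"
  shows "ring_cong (of_nat p) ((a + b) ^ p) (a ^ p + b ^ p)"
proof -
  have p0: "p > 0"
    using p prime_gt_0_nat by blast
  have "(a + b) ^ p = (\<Sum>k\<in>insert 0 (insert p {1..<p}). of_nat (p choose k) * a ^ k * b ^ (p - k))"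
    unfolding binomial_ring using p0 by (intro sum.cong) auto
  also have "\<dots> = (\<Sum>k\<in>{1..<p}. of_nat (p choose k) * a ^ k * b ^ (p - k)) + (a ^ p + b ^ p)"
    using p0 by (simp add: algebra_simps)
  finally have expand: "(a + b) ^ p - (a ^ p + b ^ p) = (\<Sum>k\<in>{1..<p}. of_nat (p choose k) * a ^ k * b ^ (p - k))"
    by simp
  have "of_nat p dvd (of_nat (p choose k) :: 'a)" if "k \<in> {1..<p}" for k
    using dvd_choose_prime[of k p] p that by (auto elim: dvdE)
  then show ?thesis
    unfolding ring_cong_def expand by (intro dvd_sum dvd_mult2)
qed

lemma minus_one_power_prime_cong:
  assumes "prime p"
  shows "ring_cong (of_nat p) ((-1::'a::comm_ring_1) ^ p) (-1)"
proof (cases "p = 2")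
  case True
  then show ?thesis
    by (simp add: ring_cong_def)
next
  case False
  then have "odd p"
    using assms prime_odd_nat prime_ge_2_nat[of p] by force
  then show ?thesis
    by simp
qed

lemma frobenius_diff_one_cong:
  fixes x :: "'a::comm_ring_1"
  assumes p: "prime p"
  shows "ring_cong (of_nat p) ((x - 1) ^ p ^ j) (x ^ p ^ j - 1)"
proof (induction j)
  case 0
  then show ?case by simp
next
  case (Suc j)
  have power_Suc_exp: "(y::'a) ^ p ^ Suc j = (y ^ p ^ j) ^ p" for y
    by (simp only: power_Suc2 power_mult)
  have "ring_cong (of_nat p) (((x - 1) ^ p ^ j) ^ p) ((x ^ p ^ j + (-1)) ^ p)"
    using ring_cong_power[OF Suc] by simp
  also have "ring_cong (of_nat p) \<dots> ((x ^ p ^ j) ^ p + (-1) ^ p)"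
    by (rule add_power_prime_cong[OF p])
  also have "ring_cong (of_nat p) \<dots> ((x ^ p ^ j) ^ p + (-1))"
    by (intro ring_cong_add ring_cong_refl minus_one_power_prime_cong p)
  finally show ?case
    unfolding power_Suc_exp by (metis diff_conv_add_uminus)
qed

lemma prime_minus_one_choose_cong:
  assumes p: "prime p" and "k < p"
  shows "[int (p - 1 choose k) = (-1) ^ k] (mod int p)"
  using \<open>k < p\<close>
proof (induction k)
  case 0
  then show ?case by simp
next
  case (Suc k)
  have "p choose Suc k = (p - 1 choose k) + (p - 1 choose Suc k)"
    using prime_gt_0_nat[OF p] binomial_Suc_Suc[of "p - 1" k] by simp
  moreover have "p dvd (p choose Suc k)"
    using dvd_choose_prime[of "Suc k" p] p Suc.prems by auto
  ultimately have "[int (p - 1 choose Suc k) = - int (p - 1 choose k)] (mod int p)"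
    by (simp add: cong_iff_dvd_diff add.commute flip: int_dvd_int_iff)
  also have "[- int (p - 1 choose k) = - ((-1) ^ k)] (mod int p)"
    using Suc by (simp add: cong_minus_minus_iff)
  finally show ?case
    by simp
qed

lemma diff_one_power_prime_minus_one_cong:
  fixes y :: "'a::comm_ring_1"
  assumes p: "prime p"
  shows "ring_cong (of_nat p) ((y - 1) ^ (p - 1)) (\<Sum>k<p. y ^ k)"
proof -
  have "(y - 1) ^ (p - 1) = (\<Sum>k<p. of_int (int (p - 1 choose k) * (-1) ^ (p - 1 - k)) * y ^ k)"
    using binomial_ring[of y "-1" "p - 1"] prime_gt_0_nat[OF p]
    by (simp add: lessThan_Suc_atMost[symmetric] ac_simps)
  also have "ring_cong (of_nat p) \<dots> (\<Sum>k<p. of_int 1 * y ^ k)"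
  proof (intro ring_cong_sum ring_cong_mult ring_cong_refl ring_cong_of_int)
    fix k assume "k \<in> {..<p}"
    then have "[int (p - 1 choose k) * (-1) ^ (p - 1 - k) = (-1) ^ k * (-1) ^ (p - 1 - k)] (mod int p)"
      using prime_minus_one_choose_cong[OF p] by (intro cong_mult) auto
    also have "(-1::int) ^ k * (-1) ^ (p - 1 - k) = (-1) ^ (p - 1)"
      using \<open>k \<in> {..<p}\<close> by (simp flip: power_add)
    also have "[(-1::int) ^ (p - 1) = 1] (mod int p)"
      using prime_odd_nat[OF p] prime_ge_2_nat[OF p]
      by (cases "p = 2") (auto simp: cong_def)
    finally show "[int (p - 1 choose k) * (-1) ^ (p - 1 - k) = 1] (mod int p)" .
  qed
  finally show ?thesis
    by simp
qed

lemma geometric_sum_mult_cong: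
  fixes y \<Phi> :: "'a::comm_ring_1"
  shows "ring_cong ((y - 1) * \<Phi>) ((\<Sum>j<n. y ^ j) * \<Phi>) (of_nat n * \<Phi>)"
proof -
  have "ring_cong ((y - 1) * \<Phi>) (y ^ j * \<Phi>) \<Phi>" for j
  proof (induction j)
    case 0
    then show ?case by simp
  next
    case (Suc j)
    have "ring_cong ((y - 1) * \<Phi>) (y * (y ^ j * \<Phi>)) (y * \<Phi>)"
      using Suc by (intro ring_cong_mult ring_cong_refl)
    moreover have "ring_cong ((y - 1) * \<Phi>) (y * \<Phi>) \<Phi>"
      by (simp add: ring_cong_def algebra_simps)
    ultimately show ?case
      by (simp add: ring_cong_trans mult.assoc)
  qed
  then have "ring_cong ((y - 1) * \<Phi>) (\<Sum>j<n. y ^ j * \<Phi>) (\<Sum>j<n. \<Phi>)"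
    by (intro ring_cong_sum)
  then show ?thesis
    by (simp add: sum_distrib_right)
qed

definition ideal2 :: "'a::comm_ring_1 \<Rightarrow> 'a \<Rightarrow> 'a set" where
  "ideal2 u v = {u * b + v * c | b c. True}"

lemma ideal2_iff: "a \<in> ideal2 u v \<longleftrightarrow> (\<exists>b c. a = u * b + v * c)"
  by (simp add: ideal2_def)

lemma ideal2_generator_left: "u * b \<in> ideal2 u v"
  unfolding ideal2_iff by (rule exI[of _ b], rule exI[of _ 0]) simp

lemma ideal2_generator_right: "v * c \<in> ideal2 u v"
  unfolding ideal2_iff by (rule exI[of _ 0], rule exI[of _ c]) simp

lemma ideal2_add: "a \<in> ideal2 u v \<Longrightarrow> e \<in> ideal2 u v \<Longrightarrow> a + e \<in> ideal2 u v"
proof -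
  assume "a \<in> ideal2 u v" "e \<in> ideal2 u v"
  then obtain b c b' c' where "a = u * b + v * c" "e = u * b' + v * c'"
    unfolding ideal2_iff by blast
  then have "a + e = u * (b + b') + v * (c + c')"
    by (simp add: algebra_simps)
  then show ?thesis
    unfolding ideal2_iff by blast
qed

lemma ideal2_mult: "a \<in> ideal2 u v \<Longrightarrow> a * e \<in> ideal2 u v"
proof -
  assume "a \<in> ideal2 u v"
  then obtain b c where "a = u * b + v * c"
    unfolding ideal2_iff by blast
  then have "a * e = u * (b * e) + v * (c * e)"
    by (simp add: algebra_simps)
  then show ?thesis
    unfolding ideal2_iff by blast
qed

lemma ideal2_scale: "a \<in> ideal2 u v \<Longrightarrow> m * a \<in> ideal2 (m * u) v"
proof -
  assume "a \<in> ideal2 u v"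
  then obtain b c where "a = u * b + v * c"
    unfolding ideal2_iff by blast
  then have "m * a = (m * u) * b + v * (m * c)"
    by (simp add: algebra_simps)
  then show ?thesis
    unfolding ideal2_iff by blast
qed

lemma ideal2_dvd_mono: "u' dvd u \<Longrightarrow> a \<in> ideal2 u v \<Longrightarrow> a \<in> ideal2 u' v"
proof -
  assume "u' dvd u" "a \<in> ideal2 u v"
  then obtain b c t where "a = u * b + v * c" "u = u' * t"
    unfolding ideal2_iff by blast
  then have "a = u' * (t * b) + v * c"
    by (simp add: algebra_simps)
  then show ?thesis
    unfolding ideal2_iff by blast
qed

lemma ideal2_if_ring_cong: "ring_cong u a v \<Longrightarrow> a \<in> ideal2 u v"
  unfolding ring_cong_iff_eq_add ideal2_iff by (metis add.commute mult.right_neutral)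

lemma ideal2_ring_cong_closed: "ring_cong v a b \<Longrightarrow> b \<in> ideal2 u v \<Longrightarrow> a \<in> ideal2 u v"
  unfolding ring_cong_iff_eq_add using ideal2_add ideal2_generator_right by (metis add.commute)

lemma diff_one_power_in_ideal2:
  fixes x :: "'a::comm_ring_1"
  assumes p: "prime p" and \<alpha>: "\<alpha> \<ge> 1"
  shows "(x - 1) ^ (p ^ \<alpha> + k * ((p - 1) * p ^ (\<alpha> - 1))) \<in> ideal2 (of_nat p ^ Suc k) (x ^ p ^ \<alpha> - 1)"
proof -
  define y where "y = x ^ p ^ (\<alpha> - 1)"
  define \<Phi> where "\<Phi> = (\<Sum>j<p. y ^ j)"
  define w where "w = x ^ p ^ \<alpha> - 1"
  define T where "T k = (x - 1) ^ (p ^ \<alpha> + k * ((p - 1) * p ^ (\<alpha> - 1)))" for k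
  have q: "p ^ \<alpha> = p ^ (\<alpha> - 1) * p"
    using \<alpha> by (simp flip: power_Suc2)
  have w: "w = (y - 1) * \<Phi>"
    unfolding w_def y_def \<Phi>_def q power_mult by (rule power_diff_1_eq)
  have y_cong: "ring_cong (of_nat p) ((x - 1) ^ p ^ (\<alpha> - 1)) (y - 1)"
    unfolding y_def by (rule frobenius_diff_one_cong[OF p])
  have "ring_cong (of_nat p) (((x - 1) ^ p ^ (\<alpha> - 1)) ^ (p - 1)) ((y - 1) ^ (p - 1))"
    by (rule ring_cong_power[OF y_cong])
  also have "ring_cong (of_nat p) \<dots> \<Phi>"
    unfolding \<Phi>_def by (rule diff_one_power_prime_minus_one_cong[OF p])
  finally have "ring_cong (of_nat p) ((x - 1) ^ ((p - 1) * p ^ (\<alpha> - 1))) \<Phi>"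
    by (metis mult.commute power_mult)
  then obtain C where C: "(x - 1) ^ ((p - 1) * p ^ (\<alpha> - 1)) = \<Phi> + of_nat p * C"
    unfolding ring_cong_iff_eq_add by blast
  have \<Phi>_square: "ring_cong w (\<Phi> * \<Phi>) (of_nat p * \<Phi>)"
    unfolding w using geometric_sum_mult_cong[of y \<Phi> p] by (simp add: \<Phi>_def)
  have T_Suc: "T (Suc k) = T k * \<Phi> + of_nat p * (T k * C)" for k
  proof -
    have "T (Suc k) = T k * (x - 1) ^ ((p - 1) * p ^ (\<alpha> - 1))"
      unfolding T_def by (simp only: mult_Suc power_add ac_simps)
    then show ?thesis
      unfolding C by (simp add: algebra_simps)
  qed
  \<comment> \<open>Multiplying by \<Phi> gains a factor p because \<Phi>^2 \<equiv> p \<Phi> mod w.\<close>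
  have "T k \<in> ideal2 (of_nat p ^ Suc k) w \<and> T k * \<Phi> \<in> ideal2 (of_nat p ^ Suc (Suc k)) w"
  proof (induction k)
    case 0
    have "T 0 \<in> ideal2 (of_nat p) w"
      unfolding T_def w_def by (simp add: ideal2_if_ring_cong frobenius_diff_one_cong[OF p])
    moreover have "T 0 * \<Phi> \<in> ideal2 (of_nat p ^ 2) w"
    proof -
      obtain D where D: "(x - 1) ^ p ^ (\<alpha> - 1) = (y - 1) + of_nat p * D"
        using y_cong unfolding ring_cong_iff_eq_add by blast
      have "ring_cong (y - 1) ((x - 1) ^ p ^ (\<alpha> - 1)) (of_nat p * D)"
        unfolding D by (simp add: ring_cong_def)
      then have "ring_cong w (((x - 1) ^ p ^ (\<alpha> - 1)) ^ p * \<Phi>) ((of_nat p * D) ^ p * \<Phi>)"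
        unfolding w by (intro ring_cong_mult_modulus ring_cong_power)
      moreover have "(of_nat p * D) ^ p * \<Phi> \<in> ideal2 (of_nat p ^ 2) w"
        using prime_ge_2_nat[OF p]
        by (intro ideal2_dvd_mono[OF _ ideal2_generator_left]) (simp add: power_mult_distrib le_imp_power_dvd)
      ultimately show ?thesis
        unfolding T_def by (simp add: q power_mult ideal2_ring_cong_closed)
    qed
    ultimately show ?case
      by (simp add: power2_eq_square)
  next
    case (Suc k)
    then have T: "T k \<in> ideal2 (of_nat p ^ Suc k) w" and T\<Phi>: "T k * \<Phi> \<in> ideal2 (of_nat p ^ Suc (Suc k)) w"
      by auto
    have "T (Suc k) \<in> ideal2 (of_nat p ^ Suc (Suc k)) w"
      unfolding T_Suc using ideal2_scale[OF ideal2_mult[OF T]]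
      by (intro ideal2_add T\<Phi>) (simp add: mult.assoc)
    moreover have "T (Suc k) * \<Phi> \<in> ideal2 (of_nat p ^ Suc (Suc (Suc k))) w"
    proof -
      have "ring_cong w (T k * \<Phi> * \<Phi>) (T k * (of_nat p * \<Phi>))"
        using ring_cong_mult[OF ring_cong_refl \<Phi>_square, of "T k"] by (simp add: mult.assoc)
      moreover have "T k * (of_nat p * \<Phi>) \<in> ideal2 (of_nat p ^ Suc (Suc (Suc k))) w"
        using ideal2_scale[OF T\<Phi>, of "of_nat p"] by (simp add: ac_simps)
      ultimately have "T k * \<Phi> * \<Phi> \<in> ideal2 (of_nat p ^ Suc (Suc (Suc k))) w"
        by (rule ideal2_ring_cong_closed)
      moreover have "of_nat p * (T k * C * \<Phi>) \<in> ideal2 (of_nat p ^ Suc (Suc (Suc k))) w"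
        using ideal2_scale[OF ideal2_mult[OF T\<Phi>, of C], of "of_nat p"] by (simp add: ac_simps)
      ultimately show ?thesis
        unfolding T_Suc by (simp add: ideal2_add algebra_simps)
    qed
    ultimately show ?case
      by blast
  qed
  then show ?thesis
    unfolding T_def w_def by blast
qed

text \<open>newton_coeff g n is the forward difference (\<Delta>^n g)(0); for N > degree a,
  coeff_pairing N g a is (a(E) g)(0), E the shift operator.\<close>

definition newton_coeff :: "(nat \<Rightarrow> int) \<Rightarrow> nat \<Rightarrow> int" where
  "newton_coeff g n = (\<Sum>m\<le>n. (-1) ^ (n - m) * int (n choose m) * g m)"

definition coeff_pairing :: "nat \<Rightarrow> (nat \<Rightarrow> int) \<Rightarrow> int poly \<Rightarrow> int" where
  "coeff_pairing N g a = (\<Sum>m<N. coeff a m * g m)"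

lemma coeff_pairing_add: "coeff_pairing N g (a + b) = coeff_pairing N g a + coeff_pairing N g b"
  unfolding coeff_pairing_def by (simp add: algebra_simps sum.distrib)

lemma coeff_pairing_diff: "coeff_pairing N g (a - b) = coeff_pairing N g a - coeff_pairing N g b"
  unfolding coeff_pairing_def by (simp add: algebra_simps sum_subtractf)

lemma coeff_pairing_sum: "coeff_pairing N g (sum f A) = (\<Sum>i\<in>A. coeff_pairing N g (f i))"
  unfolding coeff_pairing_def by (simp add: coeff_sum sum_distrib_right sum.swap[of _ A])

lemma coeff_pairing_of_nat_mult: "coeff_pairing N g (of_nat k * a) = int k * coeff_pairing N g a"
  unfolding coeff_pairing_def by (simp add: of_nat_poly sum_distrib_left ac_simps)

lemma coeff_pairing_monom: "y < N \<Longrightarrow> coeff_pairing N g (monom 1 y) = g y"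
proof -
  assume "y < N"
  have "coeff_pairing N g (monom 1 y) = (\<Sum>m<N. if m = y then g m else 0)"
    unfolding coeff_pairing_def by (intro sum.cong) auto
  then show ?thesis
    using \<open>y < N\<close> by simp
qed

lemma coeff_pairing_linear_power:
  assumes "n < N"
  shows "coeff_pairing N g ([:-1, 1:] ^ n) = newton_coeff g n"
proof -
  have "coeff_pairing N g ([:-1, 1:] ^ n) = (\<Sum>m\<le>n. coeff ([:-1, 1:] ^ n) m * g m)"
    unfolding coeff_pairing_def
  proof (rule sum.mono_neutral_right)
    show "\<forall>i\<in>{..<N} - {..n}. coeff ([:-1, 1:] ^ n) i * g i = 0"
      using degree_linear_power[of "-1::int" n] by (auto simp: coeff_eq_0)
  qed (use assms in auto)
  also have "\<dots> = newton_coeff g n"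
    unfolding newton_coeff_def by (intro sum.cong refl) (simp add: coeff_linear_poly_power)
  finally show ?thesis .
qed

lemma newton_expansion: "g y = (\<Sum>k\<le>y. int (y choose k) * newton_coeff g k)"
proof -
  have "monom (1::int) y = ([:-1, 1:] + 1) ^ y"
    by (simp add: monom_altdef one_pCons)
  also have "\<dots> = (\<Sum>k\<le>y. of_nat (y choose k) * [:-1, 1:] ^ k)"
    by (simp add: binomial_ring)
  finally have "g y = coeff_pairing (Suc y) g (\<Sum>k\<le>y. of_nat (y choose k) * [:-1, 1:] ^ k)"
    by (metis coeff_pairing_monom lessI)
  then show ?thesis
    by (simp add: coeff_pairing_sum coeff_pairing_of_nat_mult coeff_pairing_linear_power)
qed

lemma coeff_pairing_shift_periodic:
  assumes per: "\<And>m. g (m + q) = g m" and N: "N \<ge> degree c + q + 1"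
  shows "coeff_pairing N g (monom 1 q * c) = coeff_pairing N g c"
proof -
  have "coeff_pairing N g (monom 1 q * c) = (\<Sum>m\<in>{q..<N}. coeff c (m - q) * g m)"
    unfolding coeff_pairing_def coeff_monom_mult using N
    by (intro sum.mono_neutral_cong_right) auto
  also have "\<dots> = (\<Sum>i<N - q. coeff c i * g (i + q))"
    using N by (intro sum.reindex_bij_witness[of _ "\<lambda>i. i + q" "\<lambda>m. m - q"]) auto
  also have "\<dots> = coeff_pairing N g c"
    unfolding coeff_pairing_def per using N
    by (intro sum.mono_neutral_left) (auto simp: coeff_eq_0)
  finally show ?thesis .
qed

lemma newton_coeff_periodic_dvd:
  assumes p: "prime p" and \<alpha>: "\<alpha> \<ge> 1" and n: "n \<ge> p ^ \<alpha> + k * ((p - 1) * p ^ (\<alpha> - 1))"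
    and per: "\<And>m. g (m + p ^ \<alpha>) = g m"
  shows "int p ^ Suc k dvd newton_coeff g n"
proof -
  define e where "e = p ^ \<alpha> + k * ((p - 1) * p ^ (\<alpha> - 1))"
  have X: "monom (1::int) 1 - 1 = [:-1, 1:]" and X_power: "monom 1 1 ^ p ^ \<alpha> = monom (1::int) (p ^ \<alpha>)"
    by (simp_all add: monom_altdef one_pCons power_mult[symmetric])
  have "(monom (1::int) 1 - 1) ^ e * (monom 1 1 - 1) ^ (n - e) \<in> ideal2 (of_nat p ^ Suc k) (monom 1 1 ^ p ^ \<alpha> - 1)"
    unfolding e_def by (intro ideal2_mult diff_one_power_in_ideal2 p \<alpha>)
  then have "[:-1, 1:] ^ n \<in> ideal2 (of_nat p ^ Suc k) (monom (1::int) (p ^ \<alpha>) - 1)"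
    unfolding X_power X power_add[symmetric] using n by (simp add: e_def)
  then obtain b c where bc: "[:-1, 1:] ^ n = of_nat p ^ Suc k * b + (monom (1::int) (p ^ \<alpha>) - 1) * c"
    unfolding ideal2_iff by blast
  define N where "N = n + degree c + p ^ \<alpha> + 1"
  have "newton_coeff g n = coeff_pairing N g ([:-1, 1:] ^ n)"
    unfolding N_def by (simp add: coeff_pairing_linear_power)
  also have "\<dots> = int (p ^ Suc k) * coeff_pairing N g b"
    unfolding bc of_nat_power[symmetric] left_diff_distrib mult_1_left
      coeff_pairing_add coeff_pairing_diff coeff_pairing_of_nat_mult
    using coeff_pairing_shift_periodic[of g "p ^ \<alpha>", OF per] by (simp add: N_def)
  finally show ?thesis
    by simp
qed

lemma int_binom_of_nat: "int_binom (int y) k = int (y choose k)"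
  unfolding int_binom_def int_binomial gbinomial_prod_rev atLeast0LessThan ..

lemma int_binom_mult_fact: "int_binom X k * fact k = (\<Prod>i<k. X - int i)"
proof -
  have "(\<Prod>i<k. X - int i) = (-1) ^ k * pochhammer (- X) k"
    using falling_fact_pochhammer[of X k] by (simp add: atLeast0LessThan)
  then have "fact k dvd (\<Prod>i<k. X - int i)"
    using fact_dvd_pochhammer[of k "- X"] by simp
  then show ?thesis
    unfolding int_binom_def by simp
qed

lemma int_binom_add_cong:
  assumes "r * fact k dvd M"
  shows "[int_binom (X + M) k = int_binom X k] (mod r)"
proof -
  have "[(\<Prod>i<k. X + M - int i) = (\<Prod>i<k. X - int i)] (mod M)"
    by (intro cong_prod) (simp add: cong_iff_dvd_diff)
  then have "[(\<Prod>i<k. X + M - int i) = (\<Prod>i<k. X - int i)] (mod r * fact k)"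
    using assms cong_dvd_modulus by blast
  then have "fact k * r dvd fact k * (int_binom (X + M) k - int_binom X k)"
    unfolding int_binom_mult_fact[symmetric] cong_iff_dvd_diff by (simp add: algebra_simps)
  then show ?thesis
    unfolding cong_iff_dvd_diff by (rule zdvd_mult_cancel) simp
qed

lemma cong_diff_iff_mod_eq:
  assumes "k \<le> \<delta>" and "c < q"
  shows "[int k = int \<delta> - int c] (mod int q) \<longleftrightarrow> (\<delta> - k) mod q = c"
proof -
  have "[int k = int \<delta> - int c] (mod int q) \<longleftrightarrow> [int c = int (\<delta> - k)] (mod int q)"
    using assms(1) by (simp add: cong_iff_dvd_diff algebra_simps)
  also have "\<dots> \<longleftrightarrow> [c = \<delta> - k] (mod q)"
    by (rule cong_int_iff)
  also have "\<dots> \<longleftrightarrow> (\<delta> - k) mod q = c"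
    using assms(2) unfolding cong_def by (simp add: eq_commute[of c])
  finally show ?thesis .
qed

lemma comono_eq_newton_coeff:
  assumes "c < q"
  shows "comono \<delta> (int \<delta> - int c) q = newton_coeff (\<lambda>m. of_bool (m mod q = c)) \<delta>"
proof -
  have "newton_coeff (\<lambda>m. of_bool (m mod q = c)) \<delta>
      = (\<Sum>m\<in>{m. m \<le> \<delta> \<and> m mod q = c}. (-1) ^ (\<delta> - m) * int (\<delta> choose m))"
    unfolding newton_coeff_def by (intro sum.mono_neutral_cong_right) auto
  also have "\<dots> = comono \<delta> (int \<delta> - int c) q"
    unfolding comono_def
  proof (rule sum.reindex_bij_witness[of _ "\<lambda>k. \<delta> - k" "\<lambda>m. \<delta> - m"])
    fix m assume m: "m \<in> {m. m \<le> \<delta> \<and> m mod q = c}"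
    then show "\<delta> - (\<delta> - m) = m"
      by simp
    show "\<delta> - m \<in> {k. k \<le> \<delta> \<and> [int k = int \<delta> - int c] (mod int q)}"
      using m cong_diff_iff_mod_eq[of "\<delta> - m" \<delta> c q] assms by simp
    show "(-1) ^ (\<delta> - m) * int (\<delta> choose (\<delta> - m)) = (-1) ^ (\<delta> - m) * int (\<delta> choose m)"
      using m binomial_symmetric[of m \<delta>] by simp
  next
    fix k assume k: "k \<in> {k. k \<le> \<delta> \<and> [int k = int \<delta> - int c] (mod int q)}"
    then show "\<delta> - (\<delta> - k) = k"
      by simp
    show "\<delta> - k \<in> {m. m \<le> \<delta> \<and> m mod q = c}"
      using k cong_diff_iff_mod_eq[of k \<delta> c q] assms by simp
  qed
  finally show ?thesis
    by simp
qed

definition indicator_polyfract :: "nat \<Rightarrow> nat \<Rightarrow> nat \<Rightarrow> int \<Rightarrow> int" where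
  "indicator_polyfract q d c X = (\<Sum>\<delta>\<in>{0..d}. int_binom X \<delta> * comono \<delta> (int \<delta> - int c) q)"

lemma indicator_polyfract_of_nat:
  assumes "c < q"
  shows "indicator_polyfract q d c (int y)
    = (\<Sum>\<delta>\<le>d. int (y choose \<delta>) * newton_coeff (\<lambda>m. of_bool (m mod q = c)) \<delta>)"
  unfolding indicator_polyfract_def using assms
  by (simp add: comono_eq_newton_coeff int_binom_of_nat atLeast0AtMost)

lemma indicator_polyfract_at_residue:
  assumes "c < q" and "y < q" and "q \<le> d + 1"
  shows "indicator_polyfract q d c (int y) = of_bool (y = c)"
proof -
  have "indicator_polyfract q d c (int y)
      = (\<Sum>\<delta>\<le>y. int (y choose \<delta>) * newton_coeff (\<lambda>m. of_bool (m mod q = c)) \<delta>)"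
    unfolding indicator_polyfract_of_nat[OF assms(1)] using assms(2,3)
    by (intro sum.mono_neutral_right) auto
  also have "\<dots> = of_bool (y = c)"
    using assms(2) by (simp flip: newton_expansion)
  finally show ?thesis .
qed

lemma indicator_polyfract_of_nat_cong:
  assumes p: "prime p" and \<alpha>: "\<alpha> \<ge> 1" and c: "c < p ^ \<alpha>"
    and d: "p ^ \<alpha> + (\<beta> - 1) * ((p - 1) * p ^ (\<alpha> - 1)) \<le> d + 1"
  shows "[indicator_polyfract (p ^ \<alpha>) d c (int y) = of_bool (y mod p ^ \<alpha> = c)] (mod int p ^ \<beta>)"
proof -
  let ?a = "newton_coeff (\<lambda>m. of_bool (m mod p ^ \<alpha> = c))"
  have "of_bool (y mod p ^ \<alpha> = c) = (\<Sum>\<delta>\<le>y. int (y choose \<delta>) * ?a \<delta>)"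
    using newton_expansion[of "\<lambda>m. of_bool (m mod p ^ \<alpha> = c)" y] by simp
  also have "\<dots> = (\<Sum>\<delta>\<le>y + d. int (y choose \<delta>) * ?a \<delta>)"
    by (intro sum.mono_neutral_left) auto
  also have "\<dots> = indicator_polyfract (p ^ \<alpha>) d c (int y) + (\<Sum>\<delta>\<in>{d<..y + d}. int (y choose \<delta>) * ?a \<delta>)"
    unfolding indicator_polyfract_of_nat[OF c]
    by (subst sum.union_disjoint[symmetric]) (auto intro: sum.cong)
  finally have split: "of_bool (y mod p ^ \<alpha> = c) = \<dots>" .
  have "int p ^ \<beta> dvd ?a \<delta>" if "\<delta> > d" for \<delta>
  proof -
    have "int p ^ Suc (\<beta> - 1) dvd ?a \<delta>"
      using that d by (intro newton_coeff_periodic_dvd[OF p \<alpha>]) auto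
    then show ?thesis
      by (rule dvd_trans[rotated]) (rule le_imp_power_dvd, simp)
  qed
  then have "int p ^ \<beta> dvd (\<Sum>\<delta>\<in>{d<..y + d}. int (y choose \<delta>) * ?a \<delta>)"
    by (intro dvd_sum dvd_mult) auto
  then show ?thesis
    unfolding split cong_iff_dvd_diff by simp
qed

lemma indicator_polyfract_periodic:
  assumes p: "prime p" and \<alpha>: "\<alpha> \<ge> 1" and c: "c < p ^ \<alpha>"
    and d: "p ^ \<alpha> + (\<beta> - 1) * ((p - 1) * p ^ (\<alpha> - 1)) \<le> d + 1"
  shows "[indicator_polyfract (p ^ \<alpha>) d c (X + int (p ^ \<alpha>)) = indicator_polyfract (p ^ \<alpha>) d c X] (mod int p ^ \<beta>)"
proof -
  let ?Q = "indicator_polyfract (p ^ \<alpha>) d c" and ?r = "int p ^ \<beta>"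
  \<comment> \<open>Shifting the argument by multiples of p^\<beta> d! reduces the claim to arguments in \<nat>.\<close>
  have shift: "[?Q (Z + ?r * fact d * K) = ?Q Z] (mod ?r)" for Z K
    unfolding indicator_polyfract_def
  proof (intro cong_sum cong_mult cong_refl int_binom_add_cong)
    fix \<delta> assume "\<delta> \<in> {0..d}"
    then have "fact \<delta> dvd (fact d :: int)"
      by (simp add: fact_dvd)
    then show "?r * fact \<delta> dvd ?r * fact d * K"
      by (simp add: mult.assoc mult_dvd_mono)
  qed
  define M where "M = ?r * fact d * \<bar>X\<bar>"
  have "?r * fact d \<ge> 1"
    using prime_gt_0_nat[OF p] mult_mono[of 1 ?r 1 "fact d"] by simp
  then have "X + M \<ge> 0"
    unfolding M_def using mult_right_mono[of 1 "?r * fact d" "\<bar>X\<bar>"] by simp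
  then obtain Y where Y: "int Y = X + M"
    using nonneg_int_cases by metis
  have "[?Q (X + int (p ^ \<alpha>)) = ?Q (int (Y + p ^ \<alpha>))] (mod ?r)"
    using shift[of "X + int (p ^ \<alpha>)" "\<bar>X\<bar>"] Y unfolding M_def by (simp add: cong_sym add_ac)
  also have "[?Q (int (Y + p ^ \<alpha>)) = of_bool ((Y + p ^ \<alpha>) mod p ^ \<alpha> = c)] (mod ?r)"
    by (rule indicator_polyfract_of_nat_cong[OF p \<alpha> c d])
  also have "of_bool ((Y + p ^ \<alpha>) mod p ^ \<alpha> = c) = (of_bool (Y mod p ^ \<alpha> = c) :: int)"
    by simp
  also have "[\<dots> = ?Q (int Y)] (mod ?r)"
    by (rule cong_sym, rule indicator_polyfract_of_nat_cong[OF p \<alpha> c d])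
  also have "[?Q (int Y) = ?Q X] (mod ?r)"
    using shift[of X "\<bar>X\<bar>"] Y unfolding M_def by simp
  finally show ?thesis .
qed

definition product_interp ::
    "nat \<Rightarrow> nat \<Rightarrow> (nat \<Rightarrow> nat) \<Rightarrow> (nat \<Rightarrow> nat) \<Rightarrow> ((nat \<Rightarrow> nat) \<Rightarrow> int) \<Rightarrow> (nat \<Rightarrow> int) \<Rightarrow> int" where
  "product_interp p n \<alpha> d f X =
     (\<Sum>x\<in>PiE {..<n} (\<lambda>j. {..<p ^ \<alpha> j}). f x * (\<Prod>j<n. indicator_polyfract (p ^ \<alpha> j) (d j) (x j) (X j)))"

lemma polyfract_eval_interp_coef_cong:
  "[polyfract_eval n d (interp_coef p \<alpha> \<beta> n f) X = product_interp p n \<alpha> d f X] (mod int p ^ \<beta>)"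
proof -
  let ?B = "PiE {..<n} (\<lambda>j. {..<p ^ \<alpha> j})"
  let ?D = "PiE {..<n} (\<lambda>j. {0..d j})"
  let ?A = "\<lambda>\<delta>. \<Prod>j<n. int_binom (X j) (\<delta> j)"
  let ?C = "\<lambda>\<delta> x. \<Prod>j<n. comono (\<delta> j) (int (\<delta> j) - int (x j)) (p ^ \<alpha> j)"
  have "[polyfract_eval n d (interp_coef p \<alpha> \<beta> n f) X = (\<Sum>\<delta>\<in>?D. ?A \<delta> * (\<Sum>x\<in>?B. ?C \<delta> x * f x))] (mod int p ^ \<beta>)"
    unfolding polyfract_eval_def interp_coef_def
    by (intro cong_sum cong_mult cong_refl) simp
  also have "(\<Sum>\<delta>\<in>?D. ?A \<delta> * (\<Sum>x\<in>?B. ?C \<delta> x * f x)) = (\<Sum>x\<in>?B. f x * (\<Sum>\<delta>\<in>?D. ?A \<delta> * ?C \<delta> x))"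
    by (simp add: sum_distrib_left sum_distrib_right sum.swap[of _ ?D] ac_simps)
  also have "\<dots> = product_interp p n \<alpha> d f X"
    unfolding product_interp_def indicator_polyfract_def
    by (simp add: prod_sum_PiE prod.distrib)
  finally show ?thesis .
qed

lemma product_interp_periodic:
  assumes p: "prime p" and \<alpha>: "\<forall>j<n. \<alpha> j \<ge> 1"
    and d: "\<forall>j<n. p ^ \<alpha> j + (\<beta> - 1) * ((p - 1) * p ^ (\<alpha> j - 1)) \<le> d j + 1"
    and "i < n"
  shows "[product_interp p n \<alpha> d f (X(i := X i + int (p ^ \<alpha> i))) = product_interp p n \<alpha> d f X] (mod int p ^ \<beta>)"
  unfolding product_interp_def
proof (intro cong_sum cong_mult cong_refl cong_prod)
  fix x j assume x: "x \<in> PiE {..<n} (\<lambda>j. {..<p ^ \<alpha> j})" and j: "j \<in> {..<n}"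
  show "[indicator_polyfract (p ^ \<alpha> j) (d j) (x j) ((X(i := X i + int (p ^ \<alpha> i))) j)
      = indicator_polyfract (p ^ \<alpha> j) (d j) (x j) (X j)] (mod int p ^ \<beta>)"
  proof (cases "j = i")
    case True
    have "x j < p ^ \<alpha> j"
      using x j by auto
    then show ?thesis
      using indicator_polyfract_periodic[OF p, of "\<alpha> j" "x j" \<beta> "d j" "X j"] True \<alpha> d j by simp
  qed simp
qed

lemma product_interp_interpolates:
  assumes d: "\<forall>j<n. p ^ \<alpha> j \<le> d j + 1"
    and x0: "x0 \<in> PiE {..<n} (\<lambda>j. {..<p ^ \<alpha> j})"
  shows "product_interp p n \<alpha> d f (\<lambda>j. int (x0 j)) = f x0"
proof -
  let ?B = "PiE {..<n} (\<lambda>j. {..<p ^ \<alpha> j})"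
  have "(\<Prod>j<n. indicator_polyfract (p ^ \<alpha> j) (d j) (x j) (int (x0 j))) = of_bool (x = x0)"
    if x: "x \<in> ?B" for x
  proof -
    have "(\<Prod>j<n. indicator_polyfract (p ^ \<alpha> j) (d j) (x j) (int (x0 j))) = (\<Prod>j<n. of_bool (x0 j = x j))"
      using x x0 d by (intro prod.cong refl indicator_polyfract_at_residue) auto
    also have "\<dots> = of_bool (x = x0)"
    proof (cases "x = x0")
      case False
      then obtain j where "j < n" "x j \<noteq> x0 j"
        using x x0 by (metis PiE_ext lessThan_iff)
      then have "(\<Prod>j<n. of_bool (x0 j = x j) :: int) = 0"
        by (intro prod_zero) (auto intro!: bexI[of _ j])
      then show ?thesis
        using False by simp
    qed simp
    finally show ?thesis .
  qed
  then have "product_interp p n \<alpha> d f (\<lambda>j. int (x0 j)) = (\<Sum>x\<in>?B. if x = x0 then f x else 0)"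
    unfolding product_interp_def by (intro sum.cong) auto
  also have "\<dots> = f x0"
    using x0 by (simp add: finite_PiE)
  finally show ?thesis .
qed

theorem theorem3p8:
  fixes p n \<beta> :: nat and \<alpha> :: "nat \<Rightarrow> nat" and f :: "(nat \<Rightarrow> nat) \<Rightarrow> int"
    and d :: "nat \<Rightarrow> nat" and P :: "(nat \<Rightarrow> int) \<Rightarrow> int"
  assumes "prime p" and "\<forall>j<n. \<alpha> j \<ge> 1" and "\<beta> \<ge> 1"
    and "d = (\<lambda>j. p ^ \<alpha> j - 1 + (\<beta> - 1) * (p - 1) * p ^ (\<alpha> j - 1))"
    and "P = polyfract_eval n d (interp_coef p \<alpha> \<beta> n f)"
  shows "(\<forall>x :: nat \<Rightarrow> int. \<forall>j<n. [P (x(j := x j + int (p ^ \<alpha> j))) = P x] (mod (int p ^ \<beta>)))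
       \<and> (\<forall>x\<in>PiE {..<n} (\<lambda>j. {..<p ^ \<alpha> j}). [P (\<lambda>j. int (x j)) = f x] (mod (int p ^ \<beta>)))"
proof -
  have d_bound: "\<forall>j<n. p ^ \<alpha> j + (\<beta> - 1) * ((p - 1) * p ^ (\<alpha> j - 1)) \<le> d j + 1"
    using prime_gt_0_nat[OF assms(1)] by (simp add: assms(4) mult.assoc)
  have P_cong: "[P X = product_interp p n \<alpha> d f X] (mod int p ^ \<beta>)" for X
    unfolding assms(5) by (rule polyfract_eval_interp_coef_cong)
  show ?thesis
  proof (intro conjI allI impI ballI)
    fix X :: "nat \<Rightarrow> int" and j assume "j < n"
    then show "[P (X(j := X j + int (p ^ \<alpha> j))) = P X] (mod int p ^ \<beta>)"
      using P_cong product_interp_periodic[OF assms(1,2) d_bound] by (metis cong_sym cong_trans)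
  next
    fix x assume "x \<in> PiE {..<n} (\<lambda>j. {..<p ^ \<alpha> j})"
    moreover have "\<forall>j<n. p ^ \<alpha> j \<le> d j + 1"
      using d_bound le_add1 order_trans by blast
    ultimately show "[P (\<lambda>j. int (x j)) = f x] (mod int p ^ \<beta>)"
      using P_cong product_interp_interpolates by metis
  qed
qed

end
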